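(* Let $E$ be a finite set, $w\geq 1$ an integer and $e\in E$. Then: (i) the map $\mathcal{R}_e:[0,\infty)^{E\setminus\{e\}}\to(0,1]$ is non-increasing in each variable; (ii) the map $\mathcal{D}:[0,\infty)^E\to[0,|E|)$ is strictly increasing in each variable; (iii) for every $\mathbf{X}\in(0,\infty)^E$ (all coordinates positive), the map $z\in[0,\infty)\mapsto z\,\mathcal{R}_e(z\mathbf{X})$ is strictly increasing, where $z\mathbf{X}$ is the vector with entries $zX_f$.
   Context: Let $E$ be a finite set and $w$ a positive integer. For $\mathbf{Y}=(Y_f)_{f\in E}\in[0,\infty)^E$ and $S\subseteq E$ write $\mathbf{Y}^S=\prod_{f\in S}Y_f$ (with $\mathbf{Y}^\emptyset=1$). For $e\in E$ define $$\mathcal{R}_e(\mathbf{Y})=\frac{\sum_{S\subseteq E\setminus\{e\},\,|S|\leq w-1}\mathbf{Y}^S}{\sum_{S\subseteq E\setminus\{e\},\,|S|\leq w}\mathbf{Y}^S},$$ which depends only on the coordinates $Y_f$, $f\neq e$, and define $$\mathcal{D}(\mathbf{Y})=\sum_{e\in E}\frac{Y_e\mathcal{R}_e(\mathbf{Y})}{1+Y_e\mathcal{R}_e(\mathbf{Y})}.$$ *)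

theory Defs
  imports "HOL-Analysis.Analysis"
begin

text \<open>Vectors in [0,inf)^E are represented as functions Y :: 'a => real; only the
  values on E matter. Y^S is the product of Y f over f in S.\<close>

definition Rfun :: "'a set \<Rightarrow> nat \<Rightarrow> 'a \<Rightarrow> ('a \<Rightarrow> real) \<Rightarrow> real" where
  "Rfun E w e Y =
     (\<Sum>S\<in>{S. S \<subseteq> E - {e} \<and> card S \<le> w - 1}. \<Prod>f\<in>S. Y f) /
     (\<Sum>S\<in>{S. S \<subseteq> E - {e} \<and> card S \<le> w}. \<Prod>f\<in>S. Y f)"

definition Dfun :: "'a set \<Rightarrow> nat \<Rightarrow> ('a \<Rightarrow> real) \<Rightarrow> real" where
  "Dfun E w Y = (\<Sum>e\<in>E. Y e * Rfun E w e Y / (1 + Y e * Rfun E w e Y))"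

end

theory Submission
  imports Defs
begin

(* For a finite set F and k :: nat let  trunc_sum Y F k  be the sum of Y^S over
   all S \<subseteq> F with |S| < k.  Then  R_e(Y) = Q_w / Q_(w+1)  with  Q_k = trunc_sum Y (E-{e}) k,
   and, if we write  trunc_deriv X Y F k = \<Sum>e\<in>F. X e * trunc_sum Y (F-{e}) (k-1)  for the
   derivative of  trunc_sum  at Y in direction X, also  D(Y) = trunc_deriv Y Y E (w+1) / Q_(w+1)
   with Q over all of E.
   Two inequalities between these polynomials carry the whole proof:
   (a) log-concavity  Q_k Q_(k+2) \<le> Q_(k+1)^2  (induction on F), and
   (b) the "gap" inequality  (Q_w + W_w) Q_(w+1) - W_(w+1) Q_w > 0  with W_k = trunc_deriv Y Y F k,
       obtained from the closed form  W_n = n Q_n - \<Sum>_{j\<le>n} Q_j  and a consequence of (a).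
   Each of R_e and D, seen as a function of a single coordinate y = Y f, is a Moebius map
   (a + y b)/(c + y d); its monotonicity is governed by the sign of  b c - a d, which is
   (a) for R_e and (b) for D.  Finally, z \<mapsto> z R_e(zX) has derivative of the sign of (b),
   because z * (d/dz) trunc_sum (zX) = trunc_deriv (zX) (zX). *)

section \<open>Truncated subset sums\<close>

definition trunc_sum :: "('a \<Rightarrow> 'b::comm_semiring_1) \<Rightarrow> 'a set \<Rightarrow> nat \<Rightarrow> 'b" where
  "trunc_sum Y F k = (\<Sum>S\<in>Pow F. if card S < k then prod Y S else 0)"

text \<open>Directional derivative of the polynomial  Y \<mapsto> trunc_sum Y F k  at Y in direction X.
  For X = Y it is the Euler derivative, the sum of |S| Y^S over |S| < k.\<close>
definition trunc_deriv :: "('a \<Rightarrow> 'b::comm_semiring_1) \<Rightarrow> ('a \<Rightarrow> 'b) \<Rightarrow> 'a set \<Rightarrow> nat \<Rightarrow> 'b" where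
  "trunc_deriv X Y F k = (\<Sum>e\<in>F. X e * trunc_sum Y (F - {e}) (k - 1))"

lemma trunc_sum_empty: "trunc_sum Y {} k = (if 0 < k then 1 else 0)"
  by (simp add: trunc_sum_def)

lemma trunc_sum_0: "trunc_sum Y F 0 = 0"
  by (simp add: trunc_sum_def)

lemma trunc_sum_insert:
  assumes "finite F" "a \<notin> F"
  shows "trunc_sum Y (insert a F) k = trunc_sum Y F k + Y a * trunc_sum Y F (k - 1)"
proof -
  have inj: "inj_on (insert a) (Pow F)"
    using assms(2) by (intro inj_onI) (metis PowD insert_ident subsetD)
  have "trunc_sum Y (insert a F) k = trunc_sum Y F k
        + (\<Sum>S\<in>insert a ` Pow F. if card S < k then prod Y S else 0)"
    unfolding trunc_sum_def Pow_insert
    by (rule sum.union_disjoint) (use assms in auto)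
  also have "(\<Sum>S\<in>insert a ` Pow F. if card S < k then prod Y S else 0)
      = (\<Sum>S\<in>Pow F. Y a * (if card S < k - 1 then prod Y S else 0))"
    unfolding sum.reindex[OF inj] comp_def
  proof (rule sum.cong[OF refl])
    fix S assume "S \<in> Pow F"
    then have "finite S" "a \<notin> S" using assms finite_subset by auto
    then show "(if card (insert a S) < k then prod Y (insert a S) else 0)
       = Y a * (if card S < k - 1 then prod Y S else 0)"
      by auto
  qed
  finally show ?thesis by (simp add: trunc_sum_def sum_distrib_left)
qed

lemma trunc_sum_cong: "(\<And>f. f \<in> F \<Longrightarrow> Y f = Y' f) \<Longrightarrow> trunc_sum Y F k = trunc_sum Y' F k"
  unfolding trunc_sum_def by (intro sum.cong refl if_cong prod.cong) auto

lemma trunc_deriv_cong: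
  "(\<And>f. f \<in> F \<Longrightarrow> Y f = Y' f) \<Longrightarrow> trunc_deriv Y Y F k = trunc_deriv Y' Y' F k"
  unfolding trunc_deriv_def
  by (intro sum.cong refl arg_cong2[where f = "(*)"] trunc_sum_cong) auto

text \<open>Product rule for the directional derivative along the recursion of trunc_sum_insert.\<close>
lemma trunc_deriv_insert:
  assumes "finite F" "a \<notin> F"
  shows "trunc_deriv X Y (insert a F) k
       = X a * trunc_sum Y F (k - 1) + trunc_deriv X Y F k + Y a * trunc_deriv X Y F (k - 1)"
proof -
  have "insert a F - {e} = insert a (F - {e})" if "e \<in> F" for e
    using that assms(2) by auto
  then have "trunc_deriv X Y (insert a F) k
      = X a * trunc_sum Y F (k - 1) + (\<Sum>e\<in>F. X e * trunc_sum Y (insert a (F - {e})) (k - 1))"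
    unfolding trunc_deriv_def using assms by simp
  also have "(\<Sum>e\<in>F. X e * trunc_sum Y (insert a (F - {e})) (k - 1))
     = (\<Sum>e\<in>F. X e * trunc_sum Y (F - {e}) (k - 1) + Y a * (X e * trunc_sum Y (F - {e}) (k - 1 - 1)))"
    using assms by (intro sum.cong refl) (simp add: trunc_sum_insert algebra_simps)
  finally show ?thesis
    by (simp add: trunc_deriv_def sum.distrib sum_distrib_left add.assoc)
qed

lemma trunc_sum_insert_upd:
  assumes "finite F" "f \<notin> F"
  shows "trunc_sum (Y(f := t)) (insert f F) k = trunc_sum Y F k + t * trunc_sum Y F (k - 1)"
proof -
  have "trunc_sum (Y(f := t)) F j = trunc_sum Y F j" for j
    using assms(2) by (intro trunc_sum_cong) auto
  then show ?thesis using assms by (simp add: trunc_sum_insert)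
qed

lemma trunc_deriv_insert_upd:
  assumes "finite F" "f \<notin> F"
  shows "trunc_deriv (Y(f := t)) (Y(f := t)) (insert f F) k
       = t * trunc_sum Y F (k - 1) + trunc_deriv Y Y F k + t * trunc_deriv Y Y F (k - 1)"
proof -
  have "trunc_sum (Y(f := t)) F j = trunc_sum Y F j" for j
    using assms(2) by (intro trunc_sum_cong) auto
  moreover have "trunc_deriv (Y(f := t)) (Y(f := t)) F j = trunc_deriv Y Y F j" for j
    using assms(2) by (intro trunc_deriv_cong) auto
  ultimately show ?thesis using assms by (simp add: trunc_deriv_insert)
qed

section \<open>Inequalities for nonnegative weights\<close>

lemma trunc_sum_nonneg:
  fixes Y :: "'a \<Rightarrow> 'b::linordered_idom"
  shows "\<forall>f\<in>F. 0 \<le> Y f \<Longrightarrow> 0 \<le> trunc_sum Y F k"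
  unfolding trunc_sum_def by (auto intro!: sum_nonneg prod_nonneg simp: subset_iff)

text \<open>The empty set contributes 1 as soon as k > 0.\<close>
lemma trunc_sum_ge_1:
  fixes Y :: "'a \<Rightarrow> 'b::linordered_idom"
  assumes "finite F" "\<forall>f\<in>F. 0 \<le> Y f" "0 < k"
  shows "1 \<le> trunc_sum Y F k"
  using assms
proof (induction F rule: finite_induct)
  case (insert a F)
  have "0 \<le> Y a * trunc_sum Y F (k - 1)"
    using insert.prems by (intro mult_nonneg_nonneg trunc_sum_nonneg) auto
  then show ?case using insert by (simp add: trunc_sum_insert)
qed (simp add: trunc_sum_empty)

lemma trunc_sum_mono:
  fixes Y :: "'a \<Rightarrow> 'b::linordered_idom"
  shows "\<forall>f\<in>F. 0 \<le> Y f \<Longrightarrow> trunc_sum Y F k \<le> trunc_sum Y F (Suc k)"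
  unfolding trunc_sum_def by (rule sum_mono) (auto intro!: prod_nonneg)

text \<open>Inserting an element with weight y turns (a, b, c, d) into (b + y a, c + y b, d + y c);
  the new defect is a nonnegative combination of the old ones and of  b c - a d.\<close>
lemma trunc_sum_log_concave:
  fixes Y :: "'a \<Rightarrow> 'b::linordered_idom"
  assumes "finite F" "\<forall>f\<in>F. 0 \<le> Y f"
  shows "trunc_sum Y F k * trunc_sum Y F (Suc (Suc k)) \<le> (trunc_sum Y F (Suc k))\<^sup>2"
  using assms
proof (induction F arbitrary: k rule: finite_induct)
  case empty then show ?case by (simp add: trunc_sum_empty)
next
  case (insert x F)
  have nonneg: "\<forall>f\<in>F. 0 \<le> Y f" and y: "0 \<le> Y x" using insert.prems by auto
  show ?case
  proof (cases k)
    case 0 then show ?thesis by (simp add: trunc_sum_0)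
  next
    case (Suc m)
    define a b c d where "a = trunc_sum Y F m" and "b = trunc_sum Y F (Suc m)"
      and "c = trunc_sum Y F (Suc (Suc m))" and "d = trunc_sum Y F (Suc (Suc (Suc m)))"
    have lc_a: "a * c \<le> b\<^sup>2" and lc_b: "b * d \<le> c\<^sup>2"
      using insert.IH[OF nonneg, of m] insert.IH[OF nonneg, of "Suc m"]
      by (simp_all add: a_def b_def c_def d_def)
    have ad: "0 \<le> a" "0 \<le> d" using nonneg by (auto simp: a_def b_def c_def d_def intro: trunc_sum_nonneg)
    have bc: "1 \<le> b" "1 \<le> c" using nonneg insert.hyps by (auto simp: a_def b_def c_def d_def intro: trunc_sum_ge_1)
    have "(a * d) * (b * c) \<le> (b * c) * (b * c)"
      using mult_mono[OF lc_a lc_b] ad bc by (simp add: algebra_simps power2_eq_square)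
    then have cross: "a * d \<le> b * c" using bc by (simp add: mult_le_cancel_right)
    have "(c + Y x * b)\<^sup>2 - (b + Y x * a) * (d + Y x * c)
        = (c\<^sup>2 - b * d) + Y x * (b * c - a * d) + (Y x)\<^sup>2 * (b\<^sup>2 - a * c)"
      by (simp add: algebra_simps power2_eq_square)
    also have "\<dots> \<ge> 0" using y cross lc_a lc_b by simp
    finally show ?thesis using insert.hyps Suc
      by (simp add: trunc_sum_insert a_def b_def c_def d_def)
  qed
qed

lemma trunc_sum_increment_bound:
  fixes Y :: "'a \<Rightarrow> 'b::linordered_idom"
  assumes "finite F" "\<forall>f\<in>F. 0 \<le> Y f"
  shows "(trunc_sum Y F (Suc (Suc m)) - trunc_sum Y F (Suc m)) * (\<Sum>j<Suc m. trunc_sum Y F j)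
         < (trunc_sum Y F (Suc m))\<^sup>2"
proof (induction m)
  case 0
  have "1 \<le> trunc_sum Y F (Suc 0)" using assms by (auto intro: trunc_sum_ge_1)
  then show ?case by (simp add: trunc_sum_0)
next
  case (Suc m)
  define s b c d where "s = (\<Sum>j<Suc m. trunc_sum Y F j)" and "b = trunc_sum Y F (Suc m)"
    and "c = trunc_sum Y F (Suc (Suc m))" and "d = trunc_sum Y F (Suc (Suc (Suc m)))"
  have ih: "(c - b) * (s + b) < b * c"
    using Suc.IH by (simp add: s_def b_def c_def d_def algebra_simps power2_eq_square)
  have lc: "b * (d - c) \<le> c * (c - b)"
    using trunc_sum_log_concave[OF assms, of "Suc m"]
    by (simp add: s_def b_def c_def d_def algebra_simps power2_eq_square)
  have s: "0 \<le> s" unfolding s_def b_def c_def d_def by (intro sum_nonneg trunc_sum_nonneg[OF assms(2)])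
  have bc: "1 \<le> b" "1 \<le> c" using assms by (auto simp: s_def b_def c_def d_def intro: trunc_sum_ge_1)
  have "b * ((d - c) * (s + b)) \<le> c * ((c - b) * (s + b))"
    using mult_right_mono[OF lc, of "s + b"] s bc by (simp add: algebra_simps)
  also have "\<dots> < c * (b * c)" using ih bc by simp
  finally have "b * ((d - c) * (s + b)) < b * c\<^sup>2"
    by (simp add: algebra_simps power2_eq_square)
  then have "(d - c) * (s + b) < c\<^sup>2"
    using bc by (simp add: mult_less_cancel_left_pos)
  then show ?case by (simp add: s_def b_def c_def d_def)
qed

lemma trunc_deriv_closed_form:
  fixes Y :: "'a \<Rightarrow> 'b::comm_ring_1"
  assumes "finite F"
  shows "trunc_deriv Y Y F n = of_nat n * trunc_sum Y F n - (\<Sum>j<Suc n. trunc_sum Y F j)"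
  using assms
proof (induction F arbitrary: n rule: finite_induct)
  case empty
  have "(\<Sum>j<Suc n. trunc_sum Y {} j) = of_nat n"
    by (induction n) (simp_all add: trunc_sum_empty)
  then show ?case by (simp add: trunc_deriv_def trunc_sum_empty)
next
  case (insert a F)
  show ?case
  proof (cases n)
    case 0 then show ?thesis by (simp add: trunc_deriv_def trunc_sum_0)
  next
    case (Suc m)
    have shift: "(\<Sum>j<Suc (Suc m). trunc_sum Y F (j - 1)) = (\<Sum>j<Suc m. trunc_sum Y F j)"
      by (subst sum.lessThan_Suc_shift) (simp add: trunc_sum_0)
    have "(\<Sum>j<Suc (Suc m). trunc_sum Y (insert a F) j)
       = (\<Sum>j<Suc (Suc m). trunc_sum Y F j) + Y a * (\<Sum>j<Suc (Suc m). trunc_sum Y F (j - 1))"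
      using insert.hyps
      by (simp add: trunc_sum_insert sum.distrib sum_distrib_left del: sum.lessThan_Suc)
    then have partial: "(\<Sum>j<Suc (Suc m). trunc_sum Y (insert a F) j)
       = (\<Sum>j<Suc (Suc m). trunc_sum Y F j) + Y a * (\<Sum>j<Suc m. trunc_sum Y F j)"
      by (simp only: shift)
    have "trunc_deriv Y Y (insert a F) (Suc m)
        = Y a * trunc_sum Y F m + trunc_deriv Y Y F (Suc m) + Y a * trunc_deriv Y Y F m"
      using insert.hyps by (simp add: trunc_deriv_insert)
    also have "\<dots> = of_nat (Suc m) * trunc_sum Y (insert a F) (Suc m)
                    - (\<Sum>j<Suc (Suc m). trunc_sum Y (insert a F) j)"
      unfolding partial insert.IH using insert.hyps
      by (simp add: trunc_sum_insert algebra_simps del: sum.lessThan_Suc)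
    finally show ?thesis using Suc by simp
  qed
qed

text \<open>By the closed form it equals
  Q_w^2 - (Q_(w+1) - Q_w)(Q_0 + ... + Q_(w-1)).\<close>
lemma trunc_deriv_gap:
  fixes Y :: "'a \<Rightarrow> 'b::linordered_idom"
  assumes "finite F" "\<forall>f\<in>F. 0 \<le> Y f" "1 \<le> w"
  shows "0 < (trunc_sum Y F w + trunc_deriv Y Y F w) * trunc_sum Y F (Suc w)
             - trunc_deriv Y Y F (Suc w) * trunc_sum Y F w"
proof -
  obtain m where w: "w = Suc m" using assms(3) by (cases w) auto
  define A C T where "A = trunc_sum Y F (Suc m)" and "C = trunc_sum Y F (Suc (Suc m))"
    and "T = (\<Sum>j<Suc m. trunc_sum Y F j)"
  have W_w: "trunc_deriv Y Y F w = of_nat (Suc m) * A - (T + A)"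
    using trunc_deriv_closed_form[OF assms(1), of Y w]
    by (simp add: w A_def T_def del: sum.lessThan_Suc) (simp add: A_def T_def)
  have W_Suc_w: "trunc_deriv Y Y F (Suc w) = of_nat (Suc (Suc m)) * C - (T + A + C)"
    using trunc_deriv_closed_form[OF assms(1), of Y "Suc w"]
    by (simp add: w C_def del: sum.lessThan_Suc) (simp add: A_def C_def T_def)
  have "(trunc_sum Y F w + trunc_deriv Y Y F w) * trunc_sum Y F (Suc w)
          - trunc_deriv Y Y F (Suc w) * trunc_sum Y F w = A\<^sup>2 - (C - A) * T"
    unfolding W_w W_Suc_w by (simp add: w A_def[symmetric] C_def[symmetric] algebra_simps power2_eq_square)
  then show ?thesis
    using trunc_sum_increment_bound[OF assms(1,2), of m] by (simp add: A_def C_def T_def)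
qed

section \<open>Monotonicity of Moebius maps\<close>

lemma moebius_diff:
  fixes a b c d y t :: "'a::field"
  assumes "c + y * d \<noteq> 0" "c + t * d \<noteq> 0"
  shows "(a + t * b) / (c + t * d) - (a + y * b) / (c + y * d)
       = (t - y) * (b * c - a * d) / ((c + y * d) * (c + t * d))"
  using assms by (simp add: field_simps)

lemma moebius_antimono:
  fixes a b c d y t :: "'a::linordered_field"
  assumes "0 < c + y * d" "0 < c + t * d" "y \<le> t" "b * c \<le> a * d"
  shows "(a + t * b) / (c + t * d) \<le> (a + y * b) / (c + y * d)"
proof -
  have "(t - y) * (b * c - a * d) / ((c + y * d) * (c + t * d)) \<le> 0"
    using assms by (intro divide_nonpos_pos mult_nonneg_nonpos) auto
  then show ?thesis using moebius_diff[of c y d t a b] assms(1,2) by linarith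
qed

lemma moebius_strict_mono:
  fixes a b c d y t :: "'a::linordered_field"
  assumes "0 < c + y * d" "0 < c + t * d" "y < t" "a * d < b * c"
  shows "(a + y * b) / (c + y * d) < (a + t * b) / (c + t * d)"
proof -
  have "0 < (t - y) * (b * c - a * d) / ((c + y * d) * (c + t * d))"
    using assms by (intro divide_pos_pos mult_pos_pos) auto
  then show ?thesis using moebius_diff[of c y d t a b] assms(1,2) by linarith
qed

section \<open>The functions R_e and D as ratios of truncated sums\<close>

lemma Rfun_eq_ratio:
  assumes "finite E" "1 \<le> w"
  shows "Rfun E w e Y = trunc_sum Y (E - {e}) w / trunc_sum Y (E - {e}) (Suc w)"
proof -
  have "{S. S \<subseteq> E - {e} \<and> card S \<le> w - 1} = {S \<in> Pow (E - {e}). card S < w}"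
    using assms(2) by auto
  moreover have "{S. S \<subseteq> E - {e} \<and> card S \<le> w} = {S \<in> Pow (E - {e}). card S < Suc w}"
    by auto
  moreover have "finite (Pow (E - {e}))" using assms(1) by simp
  ultimately show ?thesis unfolding Rfun_def trunc_sum_def by (simp only: sum.inter_filter)
qed

text \<open>Claim (i), bounds: numerator and denominator are \<ge> 1 and the numerator is the smaller.\<close>
lemma Rfun_bounds:
  assumes "finite E" "1 \<le> w" "\<forall>f\<in>E - {e}. 0 \<le> Y f"
  shows "0 < Rfun E w e Y \<and> Rfun E w e Y \<le> 1"
proof -
  have "1 \<le> trunc_sum Y (E - {e}) w"
    using trunc_sum_ge_1[of "E - {e}" Y w] assms by auto
  moreover have "trunc_sum Y (E - {e}) w \<le> trunc_sum Y (E - {e}) (Suc w)"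
    using trunc_sum_mono[OF assms(3)] .
  ultimately show ?thesis by (simp add: Rfun_eq_ratio[OF assms(1,2)])
qed

text \<open>Each summand  y R/(1 + y R)  of D equals  Y_e Q_w(E-e) / Q_(w+1)(E), so D is the
  Euler derivative of Q_(w+1)(E) divided by Q_(w+1)(E).\<close>
lemma Dfun_eq_ratio:
  assumes "finite E" "1 \<le> w" "\<forall>f\<in>E. 0 \<le> Y f"
  shows "Dfun E w Y = trunc_deriv Y Y E (Suc w) / trunc_sum Y E (Suc w)"
proof -
  have "Y e * Rfun E w e Y / (1 + Y e * Rfun E w e Y)
      = Y e * trunc_sum Y (E - {e}) w / trunc_sum Y E (Suc w)" if e: "e \<in> E" for e
  proof -
    define A C where "A = trunc_sum Y (E - {e}) w" and "C = trunc_sum Y (E - {e}) (Suc w)"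
    have "1 \<le> C" "0 \<le> A" "0 \<le> Y e"
      using assms e trunc_sum_ge_1[of "E - {e}" Y] trunc_sum_nonneg[of "E - {e}" Y]
      by (auto simp: A_def C_def)
    moreover have "trunc_sum Y E (Suc w) = C + Y e * A"
      using trunc_sum_insert[of "E - {e}" e Y "Suc w"] assms(1) e
      by (simp add: A_def C_def insert_absorb)
    ultimately show ?thesis
      unfolding Rfun_eq_ratio[OF assms(1,2)] A_def[symmetric] C_def[symmetric]
      by (simp add: field_simps add_pos_nonneg)
  qed
  then show ?thesis
    unfolding Dfun_def trunc_deriv_def by (simp add: sum_divide_distrib)
qed

text \<open>Claim (i), monotonicity: R_e is non-increasing in each coordinate f \<noteq> e.  As a
  function of Y_f it is the Moebius map (A + y B)/(C + y A) with B C \<le> A^2 by log-concavity.\<close>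
lemma Rfun_antimono:
  assumes "finite E" "1 \<le> w" "\<forall>g\<in>E - {e}. 0 \<le> Y g" "f \<in> E - {e}" "Y f \<le> t"
  shows "Rfun E w e (Y(f := t)) \<le> Rfun E w e Y"
proof -
  define F where "F = E - {e} - {f}"
  have F: "finite F" "f \<notin> F" "E - {e} = insert f F" "\<forall>g\<in>F. 0 \<le> Y g"
    using assms by (auto simp: F_def)
  obtain v where w: "w = Suc v" using assms(2) by (cases w) auto
  define A B C where "A = trunc_sum Y F (Suc v)" and "B = trunc_sum Y F v"
    and "C = trunc_sum Y F (Suc (Suc v))"
  have R: "Rfun E w e (Y(f := s)) = (A + s * B) / (C + s * A)" for s
    unfolding Rfun_eq_ratio[OF assms(1,2)] F(3)
    by (simp add: trunc_sum_insert_upd[OF F(1,2)] w A_def B_def C_def)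
  have "0 \<le> A" "0 \<le> B" "1 \<le> C" "0 \<le> Y f"
    using trunc_sum_nonneg[OF F(4)] trunc_sum_ge_1[OF F(1,4)] assms(3,4)
    by (auto simp: A_def B_def C_def)
  moreover have "B * C \<le> A * A"
    using trunc_sum_log_concave[OF F(1,4), of v] by (simp add: A_def B_def C_def power2_eq_square)
  ultimately have "Rfun E w e (Y(f := t)) \<le> Rfun E w e (Y(f := Y f))"
    unfolding R using assms(5) by (intro moebius_antimono) (auto intro: add_pos_nonneg)
  then show ?thesis by simp
qed

text \<open>Claim (ii), bounds: every summand of D lies in [0, 1).\<close>
lemma Dfun_bounds:
  assumes "finite E" "E \<noteq> {}" "1 \<le> w" "\<forall>f\<in>E. 0 \<le> Y f"
  shows "0 \<le> Dfun E w Y \<and> Dfun E w Y < real (card E)"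
proof -
  have summand: "0 \<le> Y x * Rfun E w x Y / (1 + Y x * Rfun E w x Y)
      \<and> Y x * Rfun E w x Y / (1 + Y x * Rfun E w x Y) < 1" if "x \<in> E" for x
  proof -
    have "0 \<le> Y x * Rfun E w x Y"
      using Rfun_bounds[OF assms(1,3), of x Y] assms(4) that by simp
    then show ?thesis by simp
  qed
  then have "0 \<le> Dfun E w Y" unfolding Dfun_def by (auto intro!: sum_nonneg)
  moreover have "Dfun E w Y < (\<Sum>x\<in>E. 1)"
    unfolding Dfun_def using summand assms(1,2) by (intro sum_strict_mono) auto
  ultimately show ?thesis by simp
qed

text \<open>Claim (ii), monotonicity: D is strictly increasing in each coordinate.  As a function
  of Y_f it is the Moebius map (N0 + y N1)/(C + y A), and  N0 A < N1 C  is the gap inequality.\<close>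
lemma Dfun_strict_mono:
  assumes "finite E" "1 \<le> w" "\<forall>g\<in>E. 0 \<le> Y g" "f \<in> E" "Y f < t"
  shows "Dfun E w Y < Dfun E w (Y(f := t))"
proof -
  define F where "F = E - {f}"
  have F: "finite F" "f \<notin> F" "E = insert f F" "\<forall>g\<in>F. 0 \<le> Y g"
    using assms by (auto simp: F_def)
  define A C N0 N1 where "A = trunc_sum Y F w" and "C = trunc_sum Y F (Suc w)"
    and "N0 = trunc_deriv Y Y F (Suc w)" and "N1 = A + trunc_deriv Y Y F w"
  have D: "Dfun E w (Y(f := s)) = (N0 + s * N1) / (C + s * A)" if "0 \<le> s" for s
  proof -
    have "\<forall>g\<in>E. 0 \<le> (Y(f := s)) g" using assms(3) that by simp
    then have "Dfun E w (Y(f := s))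
        = trunc_deriv (Y(f := s)) (Y(f := s)) E (Suc w) / trunc_sum (Y(f := s)) E (Suc w)"
      by (rule Dfun_eq_ratio[OF assms(1,2)])
    then show ?thesis
      unfolding F(3)
      by (simp add: trunc_sum_insert_upd[OF F(1,2)] trunc_deriv_insert_upd[OF F(1,2)]
          A_def C_def N0_def N1_def algebra_simps)
  qed
  have "0 \<le> A" "1 \<le> C" "0 \<le> Y f"
    using trunc_sum_nonneg[OF F(4)] trunc_sum_ge_1[OF F(1,4)] assms(2,3,4)
    by (auto simp: A_def C_def)
  moreover have "N0 * A < N1 * C"
    using trunc_deriv_gap[OF F(1,4) assms(2)] by (simp add: A_def C_def N0_def N1_def algebra_simps)
  moreover have "0 \<le> t" using \<open>0 \<le> Y f\<close> assms(5) by linarith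
  ultimately have "Dfun E w (Y(f := Y f)) < Dfun E w (Y(f := t))"
    unfolding D[OF \<open>0 \<le> Y f\<close>] D[OF \<open>0 \<le> t\<close>] using assms(5)
    by (intro moebius_strict_mono) (auto intro: add_pos_nonneg)
  then show ?thesis by simp
qed

section \<open>Scaling all weights by a common factor\<close>

lemma trunc_sum_ray_deriv:
  assumes "finite F"
  shows "((\<lambda>z. trunc_sum (\<lambda>f. z * X f) F k) has_real_derivative
          trunc_deriv X (\<lambda>f. z * X f) F k) (at z)"
  using assms
proof (induction F arbitrary: k rule: finite_induct)
  case empty
  then show ?case by (simp add: trunc_sum_empty trunc_deriv_def)
next
  case (insert a F)
  have "((\<lambda>z. trunc_sum (\<lambda>f. z * X f) F k + (z * X a) * trunc_sum (\<lambda>f. z * X f) F (k - 1))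
         has_real_derivative trunc_deriv X (\<lambda>f. z * X f) F k
           + (X a * trunc_sum (\<lambda>f. z * X f) F (k - 1) + trunc_deriv X (\<lambda>f. z * X f) F (k - 1) * (z * X a)))
        (at z)"
    by (intro DERIV_add DERIV_mult insert.IH) (auto intro!: derivative_eq_intros)
  then show ?case
    using insert.hyps by (simp add: trunc_sum_insert trunc_deriv_insert algebra_simps)
qed

text \<open>Claim (iii): z \<mapsto> z R_e(z X) = z Q_w(zX) / Q_(w+1)(zX) is strictly increasing on [0, \<infinity>).
  Its derivative has numerator  (Q_w + W_w) Q_(w+1) - W_(w+1) Q_w  at Y = zX,
  since z times the ray derivative is the Euler derivative; this is the gap inequality.\<close>
lemma scaled_Rfun_strict_mono:
  assumes "finite E" "1 \<le> w" "\<forall>f\<in>E. 0 < X f"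
  shows "strict_mono_on {0..} (\<lambda>z::real. z * Rfun E w e (\<lambda>f. z * X f))"
proof -
  define F where "F = E - {e}"
  define q where "q k z = trunc_sum (\<lambda>f. z * X f) F k" for k z
  define q' where "q' k z = trunc_deriv X (\<lambda>f. z * X f) F k" for k z
  have fin: "finite F" using assms(1) by (simp add: F_def)
  have deriv_pos: "\<exists>d. ((\<lambda>z. z * q w z / q (Suc w) z) has_real_derivative d) (at z) \<and> 0 < d"
    if "0 \<le> z" for z
  proof -
    have nonneg: "\<forall>f\<in>F. 0 \<le> z * X f" using assms(3) that by (auto simp: F_def less_imp_le)
    have euler: "z * q' k z = trunc_deriv (\<lambda>f. z * X f) (\<lambda>f. z * X f) F k" for k
      by (simp add: q'_def trunc_deriv_def sum_distrib_left mult.assoc)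
    have Q: "1 \<le> q (Suc w) z" using trunc_sum_ge_1[OF fin nonneg] by (simp add: q_def)
    have "((\<lambda>z. z * q w z / q (Suc w) z) has_real_derivative
          ((q w z + z * q' w z) * q (Suc w) z - z * q' (Suc w) z * q w z) / (q (Suc w) z)\<^sup>2) (at z)"
      using Q unfolding q_def q'_def
      by (auto intro!: derivative_eq_intros trunc_sum_ray_deriv[OF fin]
               simp: power2_eq_square algebra_simps)
    moreover have "0 < (q w z + z * q' w z) * q (Suc w) z - z * q' (Suc w) z * q w z"
      using trunc_deriv_gap[OF fin nonneg assms(2)] by (simp add: euler q_def)
    ultimately show ?thesis using Q by (intro exI conjI) auto
  qed
  show ?thesis
    unfolding strict_mono_on_def Rfun_eq_ratio[OF assms(1,2)] F_def[symmetric]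
    using DERIV_pos_imp_increasing[where f = "\<lambda>z. z * q w z / q (Suc w) z"] deriv_pos
    by (auto simp: q_def)
qed

theorem proposition1:
  fixes E :: "'a set" and w :: nat and e :: 'a
  assumes "finite E" and "w \<ge> 1" and "e \<in> E"
  shows
    "(\<forall>Y. (\<forall>f\<in>E - {e}. 0 \<le> Y f) \<longrightarrow> 0 < Rfun E w e Y \<and> Rfun E w e Y \<le> 1)
     \<and> (\<forall>Y f t. (\<forall>g\<in>E - {e}. 0 \<le> Y g) \<and> f \<in> E - {e} \<and> Y f \<le> t
          \<longrightarrow> Rfun E w e (Y(f := t)) \<le> Rfun E w e Y)
     \<and> (\<forall>Y. (\<forall>f\<in>E. 0 \<le> Y f) \<longrightarrow> 0 \<le> Dfun E w Y \<and> Dfun E w Y < real (card E))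
     \<and> (\<forall>Y f t. (\<forall>g\<in>E. 0 \<le> Y g) \<and> f \<in> E \<and> Y f < t
          \<longrightarrow> Dfun E w Y < Dfun E w (Y(f := t)))
     \<and> (\<forall>X. (\<forall>f\<in>E. 0 < X f) \<longrightarrow>
          strict_mono_on {0..} (\<lambda>z::real. z * Rfun E w e (\<lambda>f. z * X f)))"
proof -
  have "E \<noteq> {}" using assms(3) by blast
  then show ?thesis
    using Rfun_bounds[OF assms(1,2)] Rfun_antimono[OF assms(1,2)]
      Dfun_bounds[OF assms(1) _ assms(2)] Dfun_strict_mono[OF assms(1,2)]
      scaled_Rfun_strict_mono[OF assms(1,2)]
    by blast
qed

end
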